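(* In the $\mathbf N$-agent system with class-wise distributions described in the context, let $\{\bar{\boldsymbol\mu}_t^{\mathbf N},\bar{\boldsymbol\nu}_t^{\mathbf N}\}_{t\ge0}$ be the collections of class-wise empirical state and action distributions induced by a policy $\bar{\boldsymbol\pi}=\{\bar{\boldsymbol\pi}_t\}_{t\ge0}$. Then for every $t\ge0$: (a) $\mathbb E|\bar{\boldsymbol\nu}_t^{\mathbf N}-\bar\nu^{\mathrm{MF}}(\bar{\boldsymbol\mu}_t^{\mathbf N},\bar{\boldsymbol\pi}_t)|_1\le\big(\sum_{k\in[K]}\frac1{\sqrt{N_k}}\big)\sqrt{|\mathcal U|}$; (b) $\mathbb E\Big|\frac1{N_{\mathrm{pop}}}\sum_{k\in[K]}\sum_{j=1}^{N_k}\bar r_k(x_{j,k}^t,u_{j,k}^t,\bar{\boldsymbol\mu}_t^{\mathbf N},\bar{\boldsymbol\nu}_t^{\mathbf N})-\sum_{k\in[K]}\theta_k\bar r_k^{\mathrm{MF}}(\bar{\boldsymbol\mu}_t^{\mathbf N},\bar{\boldsymbol\pi}_t)\Big|\le\bar C_R\big(\sum_{k}\frac1{\sqrt{N_k}}\big)\sqrt{|\mathcal U|}$; (c) $\mathbb E|\bar{\boldsymbol\mu}_{t+1}^{\mathbf N}-\bar P^{\mathrm{MF}}(\bar{\boldsymbol\mu}_t^{\mathbf N},\bar{\boldsymbol\pi}_t)|_1\le\bar C_P\big(\sum_k\frac1{\sqrt{N_k}}\big)\sqrt{|\mathcal X||\mathcal U|}$, where $\bar C_R=\bar M_R+\bar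 L_R$ and $\bar C_P=2+K\bar L_P$.
   Context: Fix $K\ge1$, $N_1,\dots,N_K\ge1$, $[K]=\{1,\dots,K\}$, $N_{\mathrm{pop}}=\sum_kN_k$, $\theta_k=N_k/N_{\mathrm{pop}}$, finite sets $\mathcal X,\mathcal U$. $\mathcal P(A)$ is the set of probability distributions on $A$; $\mathcal P^K(A)=\mathcal P(A)^K$ with elements written $\bar{\boldsymbol\mu}(\cdot,k)$ and $|\bar{\boldsymbol\mu}|_1=\sum_k\sum_a|\bar{\boldsymbol\mu}(a,k)|$. Agent $j\in[N_k]$ of class $k$ has state $x_{j,k}^t$ and action $u_{j,k}^t$; $\bar{\boldsymbol\mu}_t^{\mathbf N}(x,k)=\frac1{N_k}\sum_{j=1}^{N_k}\mathbf 1(x_{j,k}^t=x)$, $\bar{\boldsymbol\nu}_t^{\mathbf N}(u,k)=\frac1{N_k}\sum_{j=1}^{N_k}\mathbf 1(u_{j,k}^t=u)$. Constants $\bar M_R,\bar L_R,\bar L_P>0$. For each $k$: $\bar r_k:\mathcal X\times\mathcal U\times\mathcal P^K(\mathcal X)\times\mathcal P^K(\mathcal U)\to\mathbb R$, $\bar P_k:\mathcal X\times\mathcal U\times\mathcal P^K(\mathcal X)\times\mathcal P^K(\mathcal U)\to\mathcal P(\mathcal X)$ with $|\bar r_k|\le\bar M_R$, $|\bar r_k(x,u,\bar{\boldsymbol\mu}_1,\bar{\boldsymbol\nu}_1)-\bar r_k(x,u,\bar{\boldsymbol\mu}_2,\bar{\boldsymbol\nu}_2)|\le\bar L_R(|\bar{\boldsymbol\mu}_1-\bar{\boldsymbol\mu}_2|_1+|\bar{\boldsymbol\nu}_1-\bar{\boldsymbol\nu}_2|_1)$,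 $|\bar P_k(x,u,\bar{\boldsymbol\mu}_1,\bar{\boldsymbol\nu}_1)-\bar P_k(x,u,\bar{\boldsymbol\mu}_2,\bar{\boldsymbol\nu}_2)|_1\le\bar L_P(|\bar{\boldsymbol\mu}_1-\bar{\boldsymbol\mu}_2|_1+|\bar{\boldsymbol\nu}_1-\bar{\boldsymbol\nu}_2|_1)$. A policy is $\bar{\boldsymbol\pi}=\{\bar{\boldsymbol\pi}_t\}_{t\ge0}$, $\bar{\boldsymbol\pi}_t=(\bar\pi_k^t)_k$, $\bar\pi_k^t:\mathcal X\times\mathcal P^K(\mathcal X)\to\mathcal P(\mathcal U)$. Dynamics: conditioned on all states at time $t$, actions are independent across agents with $u_{j,k}^t\sim\bar\pi_k^t(x_{j,k}^t,\bar{\boldsymbol\mu}_t^{\mathbf N})$; conditioned on states and actions, next states are independent with $x_{j,k}^{t+1}\sim\bar P_k(x_{j,k}^t,u_{j,k}^t,\bar{\boldsymbol\mu}_t^{\mathbf N},\bar{\boldsymbol\nu}_t^{\mathbf N})$. Mean-field operators: $\bar\nu^{\mathrm{MF}}(\bar{\boldsymbol\mu},\bar{\boldsymbol\pi})(u,k)=\sum_x\bar\pi_k(x,\bar{\boldsymbol\mu})(u)\bar{\boldsymbol\mu}(x,k)$; $\bar P^{\mathrm{MF}}(\bar{\boldsymbol\mu},\bar{\boldsymbol\pi})(x',k)=\sum_{x,u}\bar{\boldsymbol\mu}(x,k)\bar\pi_k(x,\bar{\boldsymbol\mu})(u)\bar P_k(x,u,\bar{\boldsymbol\mu},\bar\nu^{\mathrm{MF}}(\bar{\boldsymbol\mu},\bar{\boldsymbol\pi}))(x')$;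 $\bar r_k^{\mathrm{MF}}(\bar{\boldsymbol\mu},\bar{\boldsymbol\pi})=\sum_{x,u}\bar{\boldsymbol\mu}(x,k)\bar\pi_k(x,\bar{\boldsymbol\mu})(u)\bar r_k(x,u,\bar{\boldsymbol\mu},\bar\nu^{\mathrm{MF}}(\bar{\boldsymbol\mu},\bar{\boldsymbol\pi}))$. *)

theory Defs
  imports "HOL-Probability.Probability"
begin

text \<open>Classes are indexed by k in {1..K}, agents of
class k by j in {1..N k}; a joint configuration of states (resp. actions) is a
function on pairs (k,j). Elements of P^K(A) are represented as functions
nat => A => real (class index first).\<close>

type_synonym ('a) distK = "nat \<Rightarrow> 'a \<Rightarrow> real"

definition agents :: "nat \<Rightarrow> (nat \<Rightarrow> nat) \<Rightarrow> (nat \<times> nat) set" where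
  "agents K N = {(k, j). k \<in> {1..K} \<and> j \<in> {1..N k}}"

definition is_distK :: "nat \<Rightarrow> ('a::finite) distK \<Rightarrow> bool" where
  "is_distK K mu \<longleftrightarrow> (\<forall>k\<in>{1..K}. (\<forall>a. 0 \<le> mu k a) \<and> (\<Sum>a\<in>UNIV. mu k a) = 1)"

definition l1K :: "nat \<Rightarrow> ('a::finite) distK \<Rightarrow> 'a distK \<Rightarrow> real" where
  "l1K K mu1 mu2 = (\<Sum>k\<in>{1..K}. \<Sum>a\<in>UNIV. \<bar>mu1 k a - mu2 k a\<bar>)"

definition emp :: "(nat \<Rightarrow> nat) \<Rightarrow> (nat \<times> nat \<Rightarrow> 'a) \<Rightarrow> 'a distK" where
  "emp N s k a = real (card {j \<in> {1..N k}. s (k, j) = a}) / real (N k)"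

text \<open>mean-field operators; a (single-time) policy is
  pol :: nat => 'x => 'x distK => 'u pmf  (class, state, mean field)\<close>
definition nuMF :: "('x::finite) distK \<Rightarrow> (nat \<Rightarrow> 'x \<Rightarrow> 'x distK \<Rightarrow> 'u pmf) \<Rightarrow> 'u distK" where
  "nuMF mu pol k u = (\<Sum>x\<in>UNIV. pmf (pol k x mu) u * mu k x)"

definition PMF :: "(nat \<Rightarrow> 'x \<Rightarrow> 'u \<Rightarrow> 'x distK \<Rightarrow> 'u distK \<Rightarrow> 'x pmf)
    \<Rightarrow> ('x::finite) distK \<Rightarrow> (nat \<Rightarrow> 'x \<Rightarrow> 'x distK \<Rightarrow> ('u::finite) pmf) \<Rightarrow> 'x distK" where
  "PMF P mu pol k x' =
     (\<Sum>x\<in>UNIV. \<Sum>u\<in>UNIV. mu k x * pmf (pol k x mu) u * pmf (P k x u mu (nuMF mu pol)) x')"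

definition rMF :: "(nat \<Rightarrow> 'x \<Rightarrow> 'u \<Rightarrow> 'x distK \<Rightarrow> 'u distK \<Rightarrow> real)
    \<Rightarrow> nat \<Rightarrow> ('x::finite) distK \<Rightarrow> (nat \<Rightarrow> 'x \<Rightarrow> 'x distK \<Rightarrow> ('u::finite) pmf) \<Rightarrow> real" where
  "rMF r k mu pol =
     (\<Sum>x\<in>UNIV. \<Sum>u\<in>UNIV. mu k x * pmf (pol k x mu) u * r k x u mu (nuMF mu pol))"

definition act_dist :: "nat \<Rightarrow> (nat \<Rightarrow> nat) \<Rightarrow> (nat \<Rightarrow> nat \<Rightarrow> 'x \<Rightarrow> 'x distK \<Rightarrow> 'u pmf)
    \<Rightarrow> nat \<Rightarrow> (nat \<times> nat \<Rightarrow> 'x) \<Rightarrow> (nat \<times> nat \<Rightarrow> 'u) pmf" where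
  "act_dist K N pol t s =
     Pi_pmf (agents K N) undefined (\<lambda>(k, j). pol t k (s (k, j)) (emp N s))"

definition next_dist :: "nat \<Rightarrow> (nat \<Rightarrow> nat) \<Rightarrow> (nat \<Rightarrow> 'x \<Rightarrow> 'u \<Rightarrow> 'x distK \<Rightarrow> 'u distK \<Rightarrow> 'x pmf)
    \<Rightarrow> (nat \<times> nat \<Rightarrow> 'x) \<Rightarrow> (nat \<times> nat \<Rightarrow> 'u) \<Rightarrow> (nat \<times> nat \<Rightarrow> 'x) pmf" where
  "next_dist K N P s a =
     Pi_pmf (agents K N) undefined (\<lambda>(k, j). P k (s (k, j)) (a (k, j)) (emp N s) (emp N a))"

primrec state_dist :: "nat \<Rightarrow> (nat \<Rightarrow> nat) \<Rightarrow> (nat \<Rightarrow> nat \<Rightarrow> 'x \<Rightarrow> 'x distK \<Rightarrow> 'u pmf)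
    \<Rightarrow> (nat \<Rightarrow> 'x \<Rightarrow> 'u \<Rightarrow> 'x distK \<Rightarrow> 'u distK \<Rightarrow> 'x pmf)
    \<Rightarrow> (nat \<times> nat \<Rightarrow> 'x) pmf \<Rightarrow> nat \<Rightarrow> (nat \<times> nat \<Rightarrow> 'x) pmf" where
  "state_dist K N pol P init 0 = init"
| "state_dist K N pol P init (Suc t) =
     bind_pmf (state_dist K N pol P init t)
       (\<lambda>s. bind_pmf (act_dist K N pol t s) (\<lambda>a. next_dist K N P s a))"

definition sa_dist where
  "sa_dist K N pol P init t =
     bind_pmf (state_dist K N pol P init t)
       (\<lambda>s. map_pmf (\<lambda>a. (s, a)) (act_dist K N pol t s))"

definition sas_dist where
  "sas_dist K N pol P init t =
     bind_pmf (sa_dist K N pol P init t)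
       (\<lambda>(s, a). map_pmf (\<lambda>s'. (s, a, s')) (next_dist K N P s a))"

end

(* Given the states at time t the agents act independently, and given states and actions they
   move independently.  Hence each class-wise empirical quantity is an average of N_k independent
   random vectors whose mean is the corresponding mean-field quantity, and by Bienayme's identity
   and Cauchy-Schwarz the expected l1 distance between the two is at most sqrt(|Y| / N_k) when the
   vectors are sub-probability distributions on Y.  In (b) and (c), replacing the
   empirical action distribution by the mean-field one inside the reward and the kernel costs a
   Lipschitz multiple of the error in (a); what is left are again centred averages of independent
   terms (in (c) one for sampling the actions and one for sampling the next states). *)

theory Submission
  imports Defs
begin

section \<open>Averages of independent random variables\<close>

lemma integrable_measure_pmf_finite_type [simp]:
  fixes p :: "'a::finite pmf" and f :: "'a \<Rightarrow> real"
  shows "integrable (measure_pmf p) f"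
  by (rule integrable_measure_pmf_finite) simp

lemma finite_set_Pi_pmf:
  fixes D :: "'i \<Rightarrow> 'a::finite pmf"
  assumes "finite I"
  shows "finite (set_pmf (Pi_pmf I dflt D))"
  by (simp add: assms set_Pi_pmf finite_PiE_dflt)

lemma integrable_Pi_pmf_finite:
  fixes D :: "'i \<Rightarrow> 'a::finite pmf" and f :: "('i \<Rightarrow> 'a) \<Rightarrow> real"
  assumes "finite I"
  shows "integrable (measure_pmf (Pi_pmf I dflt D)) f"
  using assms by (intro integrable_measure_pmf_finite finite_set_Pi_pmf)

lemma expectation_Pi_pmf_component:
  fixes f :: "'a \<Rightarrow> real"
  assumes "finite I" "i \<in> I"
  shows "measure_pmf.expectation (Pi_pmf I dflt D) (\<lambda>a. f (a i)) = measure_pmf.expectation (D i) f"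
proof -
  have "measure_pmf.expectation (Pi_pmf I dflt D) (\<lambda>a. f (a i))
      = measure_pmf.expectation (map_pmf (\<lambda>a. a i) (Pi_pmf I dflt D)) f"
    by simp
  also have "map_pmf (\<lambda>a. a i) (Pi_pmf I dflt D) = D i"
    using assms by (simp add: Pi_pmf_component)
  finally show ?thesis .
qed

lemma expectation_square_sum_Pi_pmf:
  fixes D :: "'i \<Rightarrow> 'a::finite pmf" and h :: "'i \<Rightarrow> 'a \<Rightarrow> real"
  assumes "finite I" "J \<subseteq> I"
    and centered: "\<And>i. i \<in> J \<Longrightarrow> measure_pmf.expectation (D i) (h i) = 0"
  shows "measure_pmf.expectation (Pi_pmf I dflt D) (\<lambda>a. (\<Sum>i\<in>J. h i (a i))\<^sup>2)
       = (\<Sum>i\<in>J. measure_pmf.expectation (D i) (\<lambda>b. (h i b)\<^sup>2))"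
proof -
  let ?M = "measure_pmf (Pi_pmf I dflt D)"
  have fin_J: "finite J" using assms finite_subset by blast
  have integrable: "integrable ?M f" for f :: "_ \<Rightarrow> real"
    using assms(1) by (rule integrable_Pi_pmf_finite)
  have indep: "prob_space.indep_vars ?M (\<lambda>_. borel) (\<lambda>i a. h i (a i)) I"
    by (intro prob_space.indep_vars_compose2[OF _ indep_vars_Pi_pmf])
       (auto simp: measure_pmf.prob_space_axioms assms(1))
  have cross: "measure_pmf.expectation (Pi_pmf I dflt D) (\<lambda>a. h i (a i) * h j (a j))
      = (if j = i then measure_pmf.expectation (D i) (\<lambda>b. (h i b)\<^sup>2) else 0)"
    if "i \<in> J" "j \<in> J" for i j
  proof (cases "j = i")
    case True
    have "i \<in> I" using that assms(2) by blast
    with True show ?thesis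
      using expectation_Pi_pmf_component[OF assms(1), where f = "\<lambda>b. (h i b)\<^sup>2"]
      by (simp add: power2_eq_square)
  next
    case False
    have "measure_pmf.expectation (Pi_pmf I dflt D) (\<lambda>a. h i (a i) * h j (a j))
        = measure_pmf.expectation (Pi_pmf I dflt D) (\<lambda>a. \<Prod>k\<in>{i, j}. h k (a k))"
      using False by simp
    also have "\<dots> = (\<Prod>k\<in>{i, j}. measure_pmf.expectation (Pi_pmf I dflt D) (\<lambda>a. h k (a k)))"
      using that assms(2) integrable
      by (intro prob_space.indep_vars_lebesgue_integral[OF measure_pmf.prob_space_axioms]
          prob_space.indep_vars_subset[OF measure_pmf.prob_space_axioms indep]) auto
    also have "\<dots> = 0"
      using that assms(1,2) centered by (simp add: expectation_Pi_pmf_component subset_eq)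
    finally show ?thesis using False by simp
  qed
  have "measure_pmf.expectation (Pi_pmf I dflt D) (\<lambda>a. (\<Sum>i\<in>J. h i (a i))\<^sup>2)
      = (\<Sum>i\<in>J. \<Sum>j\<in>J. measure_pmf.expectation (Pi_pmf I dflt D) (\<lambda>a. h i (a i) * h j (a j)))"
    by (simp add: power2_eq_square sum_product integrable)
  also have "\<dots> = (\<Sum>i\<in>J. measure_pmf.expectation (D i) (\<lambda>b. (h i b)\<^sup>2))"
    using fin_J by (simp add: cross)
  finally show ?thesis .
qed

lemma (in prob_space) expectation_abs_le_sqrt_expectation_square:
  fixes X :: "'a \<Rightarrow> real"
  assumes "integrable M X" "integrable M (\<lambda>x. (X x)\<^sup>2)"
  shows "expectation (\<lambda>x. \<bar>X x\<bar>) \<le> sqrt (expectation (\<lambda>x. (X x)\<^sup>2))"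
proof -
  have "0 \<le> variance (\<lambda>x. \<bar>X x\<bar>)"
    by (rule variance_positive)
  also have "\<dots> = expectation (\<lambda>x. (X x)\<^sup>2) - (expectation (\<lambda>x. \<bar>X x\<bar>))\<^sup>2"
    using assms by (subst variance_eq) auto
  finally show ?thesis
    by (intro real_le_rsqrt) simp
qed

lemma expectation_abs_centered_sum_Pi_pmf_le:
  fixes D :: "'i \<Rightarrow> 'a::finite pmf" and g :: "'i \<Rightarrow> 'a \<Rightarrow> real"
  assumes "finite I" "J \<subseteq> I"
  shows "measure_pmf.expectation (Pi_pmf I dflt D)
           (\<lambda>a. \<bar>\<Sum>i\<in>J. g i (a i) - measure_pmf.expectation (D i) (g i)\<bar>)
         \<le> sqrt (\<Sum>i\<in>J. measure_pmf.expectation (D i) (\<lambda>b. (g i b)\<^sup>2))"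
proof -
  define h where "h i = (\<lambda>b. g i b - measure_pmf.expectation (D i) (g i))" for i
  have integrable: "integrable (measure_pmf (Pi_pmf I dflt D)) f" for f :: "_ \<Rightarrow> real"
    using assms(1) by (rule integrable_Pi_pmf_finite)
  have "measure_pmf.expectation (Pi_pmf I dflt D) (\<lambda>a. \<bar>\<Sum>i\<in>J. h i (a i)\<bar>)
      \<le> sqrt (measure_pmf.expectation (Pi_pmf I dflt D) (\<lambda>a. (\<Sum>i\<in>J. h i (a i))\<^sup>2))"
    by (intro measure_pmf.expectation_abs_le_sqrt_expectation_square integrable)
  also have "\<dots> = sqrt (\<Sum>i\<in>J. measure_pmf.variance (D i) (g i))"
    using assms by (subst expectation_square_sum_Pi_pmf) (auto simp: h_def)
  also have "\<dots> \<le> sqrt (\<Sum>i\<in>J. measure_pmf.expectation (D i) (\<lambda>b. (g i b)\<^sup>2))"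
    by (intro real_sqrt_le_mono sum_mono) (simp add: measure_pmf.variance_eq)
  finally show ?thesis by (simp add: h_def)
qed

lemma expectation_abs_centered_sum_Pi_pmf_le_bound:
  fixes D :: "'i \<Rightarrow> 'a::finite pmf" and g :: "'i \<Rightarrow> 'a \<Rightarrow> real"
  assumes "finite I" "J \<subseteq> I" and bound: "\<And>i b. i \<in> J \<Longrightarrow> \<bar>g i b\<bar> \<le> M"
  shows "measure_pmf.expectation (Pi_pmf I dflt D)
           (\<lambda>a. \<bar>\<Sum>i\<in>J. g i (a i) - measure_pmf.expectation (D i) (g i)\<bar>)
         \<le> M * sqrt (real (card J))"
proof (cases "J = {}")
  case False
  then obtain i where "i \<in> J"
    by blast
  with bound have M_nonneg: "0 \<le> M"
    by (meson abs_ge_zero order_trans)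
  have "(g i b)\<^sup>2 \<le> M\<^sup>2" if "i \<in> J" for i b
    using power_mono[OF bound[OF that, of b] abs_ge_zero, of 2] by simp
  then have "(\<Sum>i\<in>J. measure_pmf.expectation (D i) (\<lambda>b. (g i b)\<^sup>2)) \<le> real (card J) * M\<^sup>2"
    using sum_mono[of J _ "\<lambda>_. M\<^sup>2"] by (simp add: measure_pmf.integral_le_const)
  then have "sqrt (\<Sum>i\<in>J. measure_pmf.expectation (D i) (\<lambda>b. (g i b)\<^sup>2)) \<le> sqrt (real (card J) * M\<^sup>2)"
    by (rule real_sqrt_le_mono)
  also have "\<dots> = M * sqrt (real (card J))"
    using M_nonneg by (simp add: real_sqrt_mult)
  finally show ?thesis
    using expectation_abs_centered_sum_Pi_pmf_le[OF assms(1,2)] by (rule order_trans[rotated])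
qed simp

lemma sum_sqrt_le_sqrt_card_mult_sum:
  fixes c :: "'a \<Rightarrow> real"
  assumes "\<And>y. y \<in> Y \<Longrightarrow> 0 \<le> c y"
  shows "(\<Sum>y\<in>Y. sqrt (c y)) \<le> sqrt (real (card Y) * (\<Sum>y\<in>Y. c y))"
proof (intro real_le_rsqrt)
  have "(\<Sum>y\<in>Y. 1 * sqrt (c y))\<^sup>2 \<le> (\<Sum>y\<in>Y. 1\<^sup>2) * (\<Sum>y\<in>Y. (sqrt (c y))\<^sup>2)"
    by (rule Cauchy_Schwarz_ineq_sum)
  then show "(\<Sum>y\<in>Y. sqrt (c y))\<^sup>2 \<le> real (card Y) * (\<Sum>y\<in>Y. c y)"
    using assms by simp
qed

lemma expectation_l1_mean_deviation_Pi_pmf_le: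
  fixes D :: "'i \<Rightarrow> 'a::finite pmf" and g :: "'i \<Rightarrow> 'a \<Rightarrow> 'y::finite \<Rightarrow> real"
  assumes "finite I" "J \<subseteq> I" "J \<noteq> {}"
    and g_nonneg: "\<And>i b y. i \<in> J \<Longrightarrow> 0 \<le> g i b y"
    and g_sum: "\<And>i b. i \<in> J \<Longrightarrow> (\<Sum>y\<in>UNIV. g i b y) \<le> 1"
  shows "measure_pmf.expectation (Pi_pmf I dflt D)
           (\<lambda>a. \<Sum>y\<in>UNIV. \<bar>(\<Sum>i\<in>J. g i (a i) y - measure_pmf.expectation (D i) (\<lambda>b. g i b y))
                              / real (card J)\<bar>)
         \<le> sqrt (real CARD('y)) / sqrt (real (card J))"
proof -
  define n where "n = real (card J)"
  define V where "V y = (\<Sum>i\<in>J. measure_pmf.expectation (D i) (\<lambda>b. (g i b y)\<^sup>2))" for y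
  have "finite J"
    using assms(1,2) by (rule finite_subset[rotated])
  then have n_pos: "n > 0"
    using assms(3) unfolding n_def by (simp add: card_gt_0_iff)
  have V_nonneg: "0 \<le> V y" for y
    unfolding V_def by (intro sum_nonneg Bochner_Integration.integral_nonneg) simp
  have square_le: "(\<Sum>y\<in>UNIV. (g i b y)\<^sup>2) \<le> 1" if "i \<in> J" for i b
  proof -
    have "g i b y \<le> 1" for y
      using member_le_sum[of y UNIV "g i b"] g_nonneg[OF that] g_sum[OF that, of b] by simp
    then have "(\<Sum>y\<in>UNIV. (g i b y)\<^sup>2) \<le> (\<Sum>y\<in>UNIV. g i b y)"
      by (intro sum_mono) (simp add: power2_eq_square g_nonneg[OF that] mult_left_le)
    with g_sum[OF that, of b] show ?thesis by linarith
  qed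
  have "measure_pmf.expectation (Pi_pmf I dflt D)
          (\<lambda>a. \<Sum>y\<in>UNIV. \<bar>(\<Sum>i\<in>J. g i (a i) y - measure_pmf.expectation (D i) (\<lambda>b. g i b y)) / n\<bar>)
      = (\<Sum>y\<in>UNIV. measure_pmf.expectation (Pi_pmf I dflt D)
          (\<lambda>a. \<bar>\<Sum>i\<in>J. g i (a i) y - measure_pmf.expectation (D i) (\<lambda>b. g i b y)\<bar>)) / n"
    using n_pos by (simp add: integrable_Pi_pmf_finite[OF assms(1)] abs_divide flip: sum_divide_distrib)
  also have "\<dots> \<le> (\<Sum>y\<in>UNIV. sqrt (V y)) / n"
    unfolding V_def using n_pos
    by (intro divide_right_mono sum_mono expectation_abs_centered_sum_Pi_pmf_le assms) auto
  also have "\<dots> \<le> sqrt (real CARD('y) * (\<Sum>y\<in>UNIV. V y)) / n"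
    using n_pos V_nonneg by (intro divide_right_mono sum_sqrt_le_sqrt_card_mult_sum) auto
  also have "(\<Sum>y\<in>UNIV. V y) \<le> n"
  proof -
    have "(\<Sum>y\<in>UNIV. V y) = (\<Sum>i\<in>J. measure_pmf.expectation (D i) (\<lambda>b. \<Sum>y\<in>UNIV. (g i b y)\<^sup>2))"
      unfolding V_def by (subst sum.swap) simp
    also have "\<dots> \<le> (\<Sum>i\<in>J. measure_pmf.expectation (D i) (\<lambda>b. 1))"
      by (intro sum_mono Bochner_Integration.integral_mono square_le) auto
    finally show ?thesis by (simp add: n_def)
  qed
  then have "sqrt (real CARD('y) * (\<Sum>y\<in>UNIV. V y)) / n \<le> sqrt (real CARD('y) * n) / n"
    using n_pos by (intro divide_right_mono real_sqrt_le_mono mult_left_mono) auto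
  also have "\<dots> = sqrt (real CARD('y)) / sqrt n"
    using n_pos by (simp add: real_sqrt_mult field_simps real_sqrt_divide)
  finally show ?thesis by (simp add: n_def)
qed

lemma expectation_bind_pmf_le:
  fixes f :: "'b \<Rightarrow> real"
  assumes f_nonneg: "\<And>y. 0 \<le> f y"
    and integrable_f: "\<And>x. x \<in> set_pmf p \<Longrightarrow> integrable (measure_pmf (q x)) f"
    and bound: "\<And>x. x \<in> set_pmf p \<Longrightarrow> measure_pmf.expectation (q x) f \<le> g x"
    and integrable_g: "integrable (measure_pmf p) g"
  shows "measure_pmf.expectation (bind_pmf p q) f \<le> measure_pmf.expectation p g"
proof -
  have g_nonneg: "AE x in measure_pmf p. 0 \<le> g x"
  proof (rule AE_pmfI)
    fix x assume "x \<in> set_pmf p"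
    with bound show "0 \<le> g x"
      by (meson Bochner_Integration.integral_nonneg f_nonneg order_trans)
  qed
  show ?thesis
  proof (cases "integrable (measure_pmf (bind_pmf p q)) f")
    case True
    have "ennreal (measure_pmf.expectation (bind_pmf p q) f) = (\<integral>\<^sup>+y. f y \<partial>bind_pmf p q)"
      using True f_nonneg by (intro nn_integral_eq_integral[symmetric]) auto
    also have "\<dots> = (\<integral>\<^sup>+x. \<integral>\<^sup>+y. f y \<partial>q x \<partial>p)"
      by simp
    also have "\<dots> \<le> (\<integral>\<^sup>+x. g x \<partial>p)"
    proof (intro nn_integral_mono_AE AE_pmfI)
      fix x assume x: "x \<in> set_pmf p"
      have "(\<integral>\<^sup>+y. f y \<partial>q x) = ennreal (measure_pmf.expectation (q x) f)"
        using integrable_f[OF x] f_nonneg by (simp add: nn_integral_eq_integral)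
      also have "\<dots> \<le> ennreal (g x)"
        using bound[OF x] by (rule ennreal_leI)
      finally show "(\<integral>\<^sup>+y. f y \<partial>q x) \<le> ennreal (g x)" .
    qed
    also have "\<dots> = ennreal (measure_pmf.expectation p g)"
      using integrable_g g_nonneg by (rule nn_integral_eq_integral)
    finally show ?thesis
      using g_nonneg by (simp add: ennreal_le_iff integral_nonneg_AE)
  next
    case False
    then show ?thesis
      using g_nonneg by (simp add: not_integrable_integral_eq integral_nonneg_AE)
  qed
qed

section \<open>Class-wise means and mean-field operators\<close>

definition class_mean :: "(nat \<Rightarrow> nat) \<Rightarrow> (nat \<times> nat \<Rightarrow> 'y \<Rightarrow> real) \<Rightarrow> 'y distK" where
  "class_mean N f k y = (\<Sum>j\<in>{1..N k}. f (k, j) y) / real (N k)"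

lemma agents_Sigma: "agents K N = Sigma {1..K} (\<lambda>k. {1..N k})"
  by (auto simp: agents_def)

lemma finite_agents [simp]: "finite (agents K N)"
  by (simp add: agents_Sigma)

lemma card_agents: "card (agents K N) = (\<Sum>k\<in>{1..K}. N k)"
  by (simp add: agents_Sigma card_SigmaI)

lemma sum_agents: "(\<Sum>i\<in>agents K N. F i) = (\<Sum>k\<in>{1..K}. \<Sum>j\<in>{1..N k}. F (k, j))"
  by (simp add: agents_Sigma sum.Sigma)

lemma class_mean_diff:
  "class_mean N f k y - class_mean N g k y
     = (\<Sum>i\<in>Pair k ` {1..N k}. f i y - g i y) / real (card (Pair k ` {1..N k}))"
proof -
  have "inj_on (Pair k) {1..N k}"
    by (auto simp: inj_on_def)
  then show ?thesis
    by (simp add: class_mean_def sum.reindex card_image sum_subtractf diff_divide_distrib)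
qed

lemma sum_emp_mult:
  fixes F :: "'x::finite \<Rightarrow> real"
  shows "(\<Sum>x\<in>UNIV. emp N s k x * F x) = (\<Sum>j\<in>{1..N k}. F (s (k, j))) / real (N k)"
proof -
  have "(\<Sum>x\<in>UNIV. real (card {j \<in> {1..N k}. s (k, j) = x}) * F x)
      = (\<Sum>x\<in>UNIV. \<Sum>j\<in>{j \<in> {1..N k}. s (k, j) = x}. F (s (k, j)))"
    by (intro sum.cong refl) simp
  also have "\<dots> = (\<Sum>j\<in>{1..N k}. F (s (k, j)))"
    by (rule sum.group) auto
  finally show ?thesis
    by (simp add: emp_def sum_divide_distrib[symmetric])
qed

lemma emp_eq_class_mean:
  fixes s :: "nat \<times> nat \<Rightarrow> 'x::finite"
  shows "emp N s = class_mean N (\<lambda>i y. indicator {y} (s i))"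
proof (intro ext)
  fix k y
  have "emp N s k y = (\<Sum>x\<in>UNIV. emp N s k x * indicator {y} x)"
    by (simp add: indicator_def of_bool_def if_distrib sum.delta cong: if_cong)
  then show "emp N s k y = class_mean N (\<lambda>i y. indicator {y} (s i)) k y"
    by (simp add: sum_emp_mult class_mean_def)
qed

lemma nuMF_emp:
  "nuMF (emp N s) pol = class_mean N (\<lambda>i. pmf (pol (fst i) (s i) (emp N s)))"
  by (intro ext) (simp add: nuMF_def class_mean_def mult.commute sum_emp_mult)

lemma expectation_finite_type:
  fixes p :: "'a::finite pmf"
  shows "measure_pmf.expectation p f = (\<Sum>a\<in>UNIV. f a * pmf p a)"
  by (rule integral_measure_pmf_real) auto

lemma PMF_emp:
  fixes pol :: "nat \<Rightarrow> 'x::finite \<Rightarrow> 'x distK \<Rightarrow> 'u::finite pmf"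
  shows "PMF P (emp N s) pol = class_mean N (\<lambda>i y. measure_pmf.expectation (pol (fst i) (s i) (emp N s))
           (\<lambda>b. pmf (P (fst i) (s i) b (emp N s) (nuMF (emp N s) pol)) y))"
proof (intro ext)
  fix k y
  let ?E = "\<lambda>x. measure_pmf.expectation (pol k x (emp N s))
              (\<lambda>b. pmf (P k x b (emp N s) (nuMF (emp N s) pol)) y)"
  have "PMF P (emp N s) pol k y = (\<Sum>x\<in>UNIV. emp N s k x * ?E x)"
    by (simp add: PMF_def expectation_finite_type sum_distrib_left mult_ac)
  then show "PMF P (emp N s) pol k y = class_mean N (\<lambda>i y. measure_pmf.expectation
      (pol (fst i) (s i) (emp N s)) (\<lambda>b. pmf (P (fst i) (s i) b (emp N s) (nuMF (emp N s) pol)) y)) k y"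
    by (simp add: sum_emp_mult class_mean_def)
qed

lemma rMF_emp:
  fixes pol :: "nat \<Rightarrow> 'x::finite \<Rightarrow> 'x distK \<Rightarrow> 'u::finite pmf"
  shows "rMF r k (emp N s) pol = (\<Sum>j\<in>{1..N k}. measure_pmf.expectation (pol k (s (k, j)) (emp N s))
           (\<lambda>b. r k (s (k, j)) b (emp N s) (nuMF (emp N s) pol))) / real (N k)"
proof -
  have "rMF r k (emp N s) pol = (\<Sum>x\<in>UNIV. emp N s k x * measure_pmf.expectation (pol k x (emp N s))
          (\<lambda>b. r k x b (emp N s) (nuMF (emp N s) pol)))"
    by (simp add: rMF_def expectation_finite_type sum_distrib_left mult_ac)
  then show ?thesis
    by (simp add: sum_emp_mult)
qed

lemma is_distK_emp:
  fixes s :: "nat \<times> nat \<Rightarrow> 'x::finite"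
  assumes "\<forall>k\<in>{1..K}. N k \<ge> 1"
  shows "is_distK K (emp N s)"
  unfolding is_distK_def
proof (intro ballI conjI allI)
  fix k a assume k: "k \<in> {1..K}"
  show "0 \<le> emp N s k a"
    by (simp add: emp_def)
  have "(\<Sum>a\<in>UNIV. emp N s k a * 1) = 1"
    using assms k by (subst sum_emp_mult) force
  then show "(\<Sum>a\<in>UNIV. emp N s k a) = 1"
    by simp
qed

lemma is_distK_nuMF:
  fixes pol :: "nat \<Rightarrow> 'x::finite \<Rightarrow> 'x distK \<Rightarrow> 'u::finite pmf"
  assumes "is_distK K mu"
  shows "is_distK K (nuMF mu pol)"
  unfolding is_distK_def
proof (intro ballI conjI allI)
  fix k u assume k: "k \<in> {1..K}"
  show "0 \<le> nuMF mu pol k u"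
    using assms k unfolding nuMF_def is_distK_def by (auto intro!: sum_nonneg)
  have "(\<Sum>u\<in>UNIV. nuMF mu pol k u) = (\<Sum>x\<in>UNIV. mu k x * (\<Sum>u\<in>UNIV. pmf (pol k x mu) u))"
    unfolding nuMF_def by (subst sum.swap) (simp add: sum_distrib_left mult.commute)
  also have "\<dots> = 1"
    using assms k by (simp add: sum_pmf_eq_1 is_distK_def)
  finally show "(\<Sum>u\<in>UNIV. nuMF mu pol k u) = 1" .
qed

lemma l1K_nonneg: "0 \<le> l1K K mu nu"
  unfolding l1K_def by (intro sum_nonneg) auto

lemma l1K_triangle: "l1K K mu1 mu3 \<le> l1K K mu1 mu2 + l1K K mu2 mu3"
  unfolding l1K_def sum.distrib[symmetric]
  by (intro sum_mono) (simp add: abs_triangle_ineq4 order_trans[OF _ abs_triangle_ineq])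

lemma l1K_class_mean_le:
  assumes N_pos: "\<forall>k\<in>{1..K}. N k \<ge> 1"
    and bound: "\<And>k j. k \<in> {1..K} \<Longrightarrow> j \<in> {1..N k} \<Longrightarrow> (\<Sum>y\<in>UNIV. \<bar>f (k, j) y - g (k, j) y\<bar>) \<le> c"
  shows "l1K K (class_mean N f) (class_mean N g) \<le> real K * c"
proof -
  have "(\<Sum>y\<in>UNIV. \<bar>class_mean N f k y - class_mean N g k y\<bar>) \<le> c" if k: "k \<in> {1..K}" for k
  proof -
    have "\<bar>class_mean N f k y - class_mean N g k y\<bar>
        \<le> (\<Sum>j\<in>{1..N k}. \<bar>f (k, j) y - g (k, j) y\<bar>) / real (N k)" for y
      unfolding class_mean_def diff_divide_distrib[symmetric] sum_subtractf[symmetric] abs_divide abs_of_nat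
      by (intro divide_right_mono sum_abs) simp
    then have "(\<Sum>y\<in>UNIV. \<bar>class_mean N f k y - class_mean N g k y\<bar>)
        \<le> (\<Sum>y\<in>UNIV. \<Sum>j\<in>{1..N k}. \<bar>f (k, j) y - g (k, j) y\<bar>) / real (N k)"
      unfolding sum_divide_distrib by (rule sum_mono)
    also have "\<dots> \<le> (\<Sum>j\<in>{1..N k}. c) / real (N k)"
      by (subst sum.swap) (intro divide_right_mono sum_mono bound k; simp)
    also have "\<dots> = c"
      using N_pos k by (simp add: Suc_le_eq)
    finally show ?thesis .
  qed
  then have "l1K K (class_mean N f) (class_mean N g) \<le> (\<Sum>k\<in>{1..K}. c)"
    unfolding l1K_def by (rule sum_mono)
  then show ?thesis
    by simp
qed

lemma integrable_act_dist [simp]: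
  fixes pol :: "nat \<Rightarrow> nat \<Rightarrow> 'x \<Rightarrow> 'x distK \<Rightarrow> 'u::finite pmf" and f :: "_ \<Rightarrow> real"
  shows "integrable (measure_pmf (act_dist K N pol t s)) f"
  unfolding act_dist_def by (rule integrable_Pi_pmf_finite[OF finite_agents])

lemma integrable_next_dist [simp]:
  fixes P :: "nat \<Rightarrow> 'x \<Rightarrow> 'u \<Rightarrow> 'x distK \<Rightarrow> 'u distK \<Rightarrow> 'x::finite pmf" and f :: "_ \<Rightarrow> real"
  shows "integrable (measure_pmf (next_dist K N P s a)) f"
  unfolding next_dist_def by (rule integrable_Pi_pmf_finite[OF finite_agents])

section \<open>Errors of the mean-field approximation\<close>

lemma expectation_l1K_class_mean_Pi_pmf_le:
  fixes D :: "nat \<times> nat \<Rightarrow> 'a::finite pmf" and g :: "nat \<times> nat \<Rightarrow> 'a \<Rightarrow> 'y::finite \<Rightarrow> real"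
  assumes N_pos: "\<forall>k\<in>{1..K}. N k \<ge> 1"
    and g_nonneg: "\<And>i b y. 0 \<le> g i b y" and g_sum: "\<And>i b. (\<Sum>y\<in>UNIV. g i b y) \<le> 1"
  shows "measure_pmf.expectation (Pi_pmf (agents K N) dflt D)
           (\<lambda>a. l1K K (class_mean N (\<lambda>i. g i (a i)))
                       (class_mean N (\<lambda>i y. measure_pmf.expectation (D i) (\<lambda>b. g i b y))))
         \<le> (\<Sum>k\<in>{1..K}. 1 / sqrt (real (N k))) * sqrt (real CARD('y))"
proof -
  have class_bound: "measure_pmf.expectation (Pi_pmf (agents K N) dflt D)
      (\<lambda>a. \<Sum>y\<in>UNIV. \<bar>class_mean N (\<lambda>i. g i (a i)) k y
                      - class_mean N (\<lambda>i y. measure_pmf.expectation (D i) (\<lambda>b. g i b y)) k y\<bar>)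
      \<le> sqrt (real CARD('y)) / sqrt (real (N k))" if k: "k \<in> {1..K}" for k
  proof -
    have "inj_on (Pair k) {1..N k}"
      by (auto simp: inj_on_def)
    then have card: "card (Pair k ` {1..N k}) = N k"
      by (simp add: card_image)
    have "Pair k ` {1..N k} \<subseteq> agents K N" "Pair k ` {1..N k} \<noteq> {}"
      using k N_pos by (auto simp: agents_def)
    then have "measure_pmf.expectation (Pi_pmf (agents K N) dflt D)
        (\<lambda>a. \<Sum>y\<in>UNIV. \<bar>(\<Sum>i\<in>Pair k ` {1..N k}. g i (a i) y - measure_pmf.expectation (D i) (\<lambda>b. g i b y))
                         / real (card (Pair k ` {1..N k}))\<bar>)
        \<le> sqrt (real CARD('y)) / sqrt (real (card (Pair k ` {1..N k})))"
      by (intro expectation_l1_mean_deviation_Pi_pmf_le g_nonneg g_sum) auto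
    then show ?thesis
      unfolding class_mean_diff card .
  qed
  have "measure_pmf.expectation (Pi_pmf (agents K N) dflt D)
           (\<lambda>a. l1K K (class_mean N (\<lambda>i. g i (a i)))
                       (class_mean N (\<lambda>i y. measure_pmf.expectation (D i) (\<lambda>b. g i b y))))
      \<le> (\<Sum>k\<in>{1..K}. sqrt (real CARD('y)) / sqrt (real (N k)))"
    unfolding l1K_def
    by (subst Bochner_Integration.integral_sum)
       (auto intro!: sum_mono class_bound integrable_Pi_pmf_finite)
  then show ?thesis
    by (simp add: sum_distrib_right)
qed

lemma expectation_act_dist_l1K_nuMF_le:
  fixes pol :: "nat \<Rightarrow> nat \<Rightarrow> 'x::finite \<Rightarrow> 'x distK \<Rightarrow> 'u::finite pmf"
  assumes N_pos: "\<forall>k\<in>{1..K}. N k \<ge> 1"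
  shows "measure_pmf.expectation (act_dist K N pol t s) (\<lambda>a. l1K K (emp N a) (nuMF (emp N s) (pol t)))
         \<le> (\<Sum>k\<in>{1..K}. 1 / sqrt (real (N k))) * sqrt (real CARD('u))"
proof -
  define mu where "mu = emp N s" \<comment> \<open>so that unfolding emp_eq_class_mean below rewrites only emp N a\<close>
  define D where "D = (\<lambda>(k, j). pol t k (s (k, j)) mu)"
  have nu_eq: "nuMF mu (pol t) = class_mean N (\<lambda>i y. measure_pmf.expectation (D i) (\<lambda>b. indicator {y} b))"
    by (simp add: mu_def nuMF_emp D_def measure_pmf_single split_beta)
  show ?thesis
    unfolding act_dist_def mu_def[symmetric] D_def[symmetric] nu_eq
    unfolding emp_eq_class_mean[of N a for a]
    by (intro expectation_l1K_class_mean_Pi_pmf_le N_pos) (auto simp: indicator_def of_bool_def)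
qed

lemma expectation_next_dist_l1K_emp_le:
  fixes P :: "nat \<Rightarrow> 'x::finite \<Rightarrow> 'u::finite \<Rightarrow> 'x distK \<Rightarrow> 'u distK \<Rightarrow> 'x pmf"
  assumes N_pos: "\<forall>k\<in>{1..K}. N k \<ge> 1"
  shows "measure_pmf.expectation (next_dist K N P s a)
           (\<lambda>s'. l1K K (emp N s') (class_mean N (\<lambda>i. pmf (P (fst i) (s i) (a i) (emp N s) (emp N a)))))
         \<le> (\<Sum>k\<in>{1..K}. 1 / sqrt (real (N k))) * sqrt (real CARD('x))"
proof -
  define mu where "mu = emp N s"
  define nu where "nu = emp N a"
  define D where "D = (\<lambda>(k, j). P k (s (k, j)) (a (k, j)) mu nu)"
  have mean_eq: "class_mean N (\<lambda>i. pmf (P (fst i) (s i) (a i) mu nu))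
      = class_mean N (\<lambda>i y. measure_pmf.expectation (D i) (\<lambda>b. indicator {y} b))"
    by (simp add: D_def measure_pmf_single split_beta)
  show ?thesis
    unfolding next_dist_def mu_def[symmetric] nu_def[symmetric] D_def[symmetric] mean_eq
    unfolding emp_eq_class_mean[of N s' for s']
    by (intro expectation_l1K_class_mean_Pi_pmf_le N_pos) (auto simp: indicator_def of_bool_def)
qed

lemma expectation_act_dist_l1K_PMF_le:
  fixes P :: "nat \<Rightarrow> 'x::finite \<Rightarrow> 'u::finite \<Rightarrow> 'x distK \<Rightarrow> 'u distK \<Rightarrow> 'x pmf"
  assumes N_pos: "\<forall>k\<in>{1..K}. N k \<ge> 1"
  shows "measure_pmf.expectation (act_dist K N pol t s)
           (\<lambda>a. l1K K (class_mean N (\<lambda>i. pmf (P (fst i) (s i) (a i) (emp N s) (nuMF (emp N s) (pol t)))))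
                       (PMF P (emp N s) (pol t)))
         \<le> (\<Sum>k\<in>{1..K}. 1 / sqrt (real (N k))) * sqrt (real CARD('x))"
proof -
  define mu where "mu = emp N s"
  define D where "D = (\<lambda>(k, j). pol t k (s (k, j)) mu)"
  have PMF_eq: "PMF P mu (pol t) = class_mean N (\<lambda>i y. measure_pmf.expectation (D i)
      (\<lambda>b. pmf (P (fst i) (s i) b mu (nuMF mu (pol t))) y))"
    by (simp add: mu_def PMF_emp D_def split_beta)
  show ?thesis
    unfolding act_dist_def mu_def[symmetric] D_def[symmetric] PMF_eq
    by (intro expectation_l1K_class_mean_Pi_pmf_le N_pos) (auto simp: sum_pmf_eq_1)
qed

lemma l1K_emp_PMF_le:
  fixes P :: "nat \<Rightarrow> 'x::finite \<Rightarrow> 'u::finite \<Rightarrow> 'x distK \<Rightarrow> 'u distK \<Rightarrow> 'x pmf"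
    and pol :: "nat \<Rightarrow> 'x \<Rightarrow> 'x distK \<Rightarrow> 'u pmf"
  assumes N_pos: "\<forall>k\<in>{1..K}. N k \<ge> 1"
    and P_lip: "\<forall>k\<in>{1..K}. \<forall>x u mu1 nu1 mu2 nu2.
        is_distK K mu1 \<and> is_distK K nu1 \<and> is_distK K mu2 \<and> is_distK K nu2 \<longrightarrow>
        (\<Sum>y\<in>UNIV. \<bar>pmf (P k x u mu1 nu1) y - pmf (P k x u mu2 nu2) y\<bar>)
          \<le> L_P * (l1K K mu1 mu2 + l1K K nu1 nu2)"
  shows "l1K K (emp N s') (PMF P (emp N s) pol)
    \<le> l1K K (emp N s') (class_mean N (\<lambda>i. pmf (P (fst i) (s i) (a i) (emp N s) (emp N a))))
      + real K * L_P * l1K K (emp N a) (nuMF (emp N s) pol)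
      + l1K K (class_mean N (\<lambda>i. pmf (P (fst i) (s i) (a i) (emp N s) (nuMF (emp N s) pol))))
              (PMF P (emp N s) pol)"
proof -
  define mu where "mu = emp N s"
  define nu where "nu = nuMF mu pol"
  let ?A = "class_mean N (\<lambda>i. pmf (P (fst i) (s i) (a i) mu (emp N a)))"
  let ?B = "class_mean N (\<lambda>i. pmf (P (fst i) (s i) (a i) mu nu))"
  have dists: "is_distK K mu" "is_distK K (emp N a)" "is_distK K nu"
    unfolding mu_def nu_def by (intro is_distK_emp is_distK_nuMF N_pos)+
  have lipschitz: "l1K K ?A ?B \<le> real K * (L_P * l1K K (emp N a) nu)"
  proof (rule l1K_class_mean_le[OF N_pos])
    fix k j assume "k \<in> {1..K}"
    with P_lip dists have "(\<Sum>y\<in>UNIV. \<bar>pmf (P k (s (k, j)) (a (k, j)) mu (emp N a)) y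
        - pmf (P k (s (k, j)) (a (k, j)) mu nu) y\<bar>) \<le> L_P * (l1K K mu mu + l1K K (emp N a) nu)"
      by blast
    then show "(\<Sum>y\<in>UNIV. \<bar>pmf (P (fst (k, j)) (s (k, j)) (a (k, j)) mu (emp N a)) y
        - pmf (P (fst (k, j)) (s (k, j)) (a (k, j)) mu nu) y\<bar>) \<le> L_P * l1K K (emp N a) nu"
      by (simp add: l1K_def)
  qed
  have "l1K K (emp N s') (PMF P mu pol) \<le> l1K K (emp N s') ?A + l1K K ?A (PMF P mu pol)"
    by (rule l1K_triangle)
  also have "l1K K ?A (PMF P mu pol) \<le> l1K K ?A ?B + l1K K ?B (PMF P mu pol)"
    by (rule l1K_triangle)
  finally show ?thesis
    using lipschitz unfolding mu_def nu_def by (simp add: mult.assoc)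
qed

lemma expectation_transition_deviation_le:
  fixes P :: "nat \<Rightarrow> 'x::finite \<Rightarrow> 'u::finite \<Rightarrow> 'x distK \<Rightarrow> 'u distK \<Rightarrow> 'x pmf"
    and pol :: "nat \<Rightarrow> nat \<Rightarrow> 'x \<Rightarrow> 'x distK \<Rightarrow> 'u pmf"
  assumes N_pos: "\<forall>k\<in>{1..K}. N k \<ge> 1" and L_P_nonneg: "0 \<le> L_P"
    and P_lip: "\<forall>k\<in>{1..K}. \<forall>x u mu1 nu1 mu2 nu2.
        is_distK K mu1 \<and> is_distK K nu1 \<and> is_distK K mu2 \<and> is_distK K nu2 \<longrightarrow>
        (\<Sum>y\<in>UNIV. \<bar>pmf (P k x u mu1 nu1) y - pmf (P k x u mu2 nu2) y\<bar>)
          \<le> L_P * (l1K K mu1 mu2 + l1K K nu1 nu2)"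
  shows "measure_pmf.expectation (act_dist K N pol t s) (\<lambda>a. measure_pmf.expectation (next_dist K N P s a)
           (\<lambda>s'. l1K K (emp N s') (PMF P (emp N s) (pol t))))
         \<le> (2 + real K * L_P) * (\<Sum>k\<in>{1..K}. 1 / sqrt (real (N k))) * sqrt (real CARD('x) * real CARD('u))"
proof -
  define S where "S = (\<Sum>k\<in>{1..K}. 1 / sqrt (real (N k)))"
  define mu where "mu = emp N s"
  define nu where "nu = nuMF mu (pol t)"
  let ?A = "\<lambda>a. class_mean N (\<lambda>i. pmf (P (fst i) (s i) (a i) mu (emp N a)))"
  let ?B = "\<lambda>a. class_mean N (\<lambda>i. pmf (P (fst i) (s i) (a i) mu nu))"
  let ?E_act = "measure_pmf.expectation (act_dist K N pol t s)"
  have S_nonneg: "0 \<le> S"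
    unfolding S_def by (intro sum_nonneg) auto
  have inner: "measure_pmf.expectation (next_dist K N P s a) (\<lambda>s'. l1K K (emp N s') (PMF P mu (pol t)))
      \<le> S * sqrt (real CARD('x)) + real K * L_P * l1K K (emp N a) nu + l1K K (?B a) (PMF P mu (pol t))" for a
  proof -
    have "measure_pmf.expectation (next_dist K N P s a) (\<lambda>s'. l1K K (emp N s') (PMF P mu (pol t)))
        \<le> measure_pmf.expectation (next_dist K N P s a) (\<lambda>s'. l1K K (emp N s') (?A a)
             + (real K * L_P * l1K K (emp N a) nu + l1K K (?B a) (PMF P mu (pol t))))"
      using l1K_emp_PMF_le[OF N_pos P_lip, where s = s and a = a and pol = "pol t"]
      unfolding mu_def nu_def by (intro Bochner_Integration.integral_mono integrable_next_dist) (simp add: add.assoc)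
    also have "\<dots> = measure_pmf.expectation (next_dist K N P s a) (\<lambda>s'. l1K K (emp N s') (?A a))
        + (real K * L_P * l1K K (emp N a) nu + l1K K (?B a) (PMF P mu (pol t)))"
      by simp
    also have "\<dots> \<le> S * sqrt (real CARD('x)) + (real K * L_P * l1K K (emp N a) nu + l1K K (?B a) (PMF P mu (pol t)))"
      using expectation_next_dist_l1K_emp_le[OF N_pos, where P = P and s = s and a = a] unfolding S_def mu_def by simp
    finally show ?thesis by (simp add: add.assoc)
  qed
  have "?E_act (\<lambda>a. measure_pmf.expectation (next_dist K N P s a) (\<lambda>s'. l1K K (emp N s') (PMF P mu (pol t))))
      \<le> ?E_act (\<lambda>a. S * sqrt (real CARD('x)) + real K * L_P * l1K K (emp N a) nu + l1K K (?B a) (PMF P mu (pol t)))"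
    by (intro Bochner_Integration.integral_mono integrable_act_dist inner)
  also have "\<dots> = S * sqrt (real CARD('x)) + real K * L_P * ?E_act (\<lambda>a. l1K K (emp N a) nu)
      + ?E_act (\<lambda>a. l1K K (?B a) (PMF P mu (pol t)))"
    by simp
  also have "\<dots> \<le> S * sqrt (real CARD('x)) + real K * L_P * (S * sqrt (real CARD('u))) + S * sqrt (real CARD('x))"
    using expectation_act_dist_l1K_nuMF_le[OF N_pos, where pol = pol and t = t and s = s]
      expectation_act_dist_l1K_PMF_le[OF N_pos, where pol = pol and t = t and s = s and P = P]
      L_P_nonneg
    unfolding S_def mu_def nu_def by (intro add_mono order_refl mult_left_mono) auto
  also have "\<dots> \<le> (2 + real K * L_P) * S * sqrt (real CARD('x) * real CARD('u))"
  proof -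
    have "sqrt (real CARD('x)) \<le> sqrt (real CARD('x) * real CARD('u))"
         "sqrt (real CARD('u)) \<le> sqrt (real CARD('x) * real CARD('u))"
      by (simp_all add: mult_le_cancel_left1 mult_le_cancel_right1)
    then show ?thesis
      using S_nonneg L_P_nonneg by (simp add: algebra_simps add_mono mult_left_mono)
  qed
  finally show ?thesis
    unfolding S_def mu_def nu_def .
qed

lemma sum_weighted_rMF_emp:
  fixes r :: "nat \<Rightarrow> 'x::finite \<Rightarrow> 'u::finite \<Rightarrow> 'x distK \<Rightarrow> 'u distK \<Rightarrow> real"
    and pol :: "nat \<Rightarrow> 'x \<Rightarrow> 'x distK \<Rightarrow> 'u pmf"
  assumes N_pos: "\<forall>k\<in>{1..K}. N k \<ge> 1"
  shows "(\<Sum>k\<in>{1..K}. (real (N k) / c) * rMF r k (emp N s) pol)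
       = (\<Sum>i\<in>agents K N. measure_pmf.expectation (pol (fst i) (s i) (emp N s))
            (\<lambda>b. r (fst i) (s i) b (emp N s) (nuMF (emp N s) pol))) / c"
proof -
  have "(real (N k) / c) * rMF r k (emp N s) pol
      = (\<Sum>j\<in>{1..N k}. measure_pmf.expectation (pol k (s (k, j)) (emp N s))
           (\<lambda>b. r k (s (k, j)) b (emp N s) (nuMF (emp N s) pol))) / c" if "k \<in> {1..K}" for k
    using N_pos that by (simp add: rMF_emp)
  then show ?thesis
    by (simp add: sum_agents sum_divide_distrib)
qed

lemma reward_deviation_le:
  fixes r :: "nat \<Rightarrow> 'x::finite \<Rightarrow> 'u::finite \<Rightarrow> 'x distK \<Rightarrow> 'u distK \<Rightarrow> real"
    and pol :: "nat \<Rightarrow> 'x \<Rightarrow> 'x distK \<Rightarrow> 'u pmf"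
  assumes K_pos: "K \<ge> 1" and N_pos: "\<forall>k\<in>{1..K}. N k \<ge> 1"
    and r_lip: "\<forall>k\<in>{1..K}. \<forall>x u mu1 nu1 mu2 nu2.
        is_distK K mu1 \<and> is_distK K nu1 \<and> is_distK K mu2 \<and> is_distK K nu2 \<longrightarrow>
        \<bar>r k x u mu1 nu1 - r k x u mu2 nu2\<bar> \<le> L_R * (l1K K mu1 mu2 + l1K K nu1 nu2)"
  shows "\<bar>(1 / real (\<Sum>k\<in>{1..K}. N k)) *
              (\<Sum>k\<in>{1..K}. \<Sum>j\<in>{1..N k}. r k (s (k, j)) (a (k, j)) (emp N s) (emp N a))
           - (\<Sum>k\<in>{1..K}. (real (N k) / real (\<Sum>k'\<in>{1..K}. N k')) * rMF r k (emp N s) pol)\<bar>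
    \<le> L_R * l1K K (emp N a) (nuMF (emp N s) pol)
      + \<bar>\<Sum>i\<in>agents K N. r (fst i) (s i) (a i) (emp N s) (nuMF (emp N s) pol)
           - measure_pmf.expectation (pol (fst i) (s i) (emp N s))
               (\<lambda>b. r (fst i) (s i) b (emp N s) (nuMF (emp N s) pol))\<bar> / real (\<Sum>k\<in>{1..K}. N k)"
proof -
  define n where "n = real (\<Sum>k\<in>{1..K}. N k)"
  define mu where "mu = emp N s"
  define nu where "nu = nuMF mu pol"
  define G where "G i b = r (fst i) (s i) b mu nu" for i b
  define EG where "EG i = measure_pmf.expectation (pol (fst i) (s i) mu) (G i)" for i
  have "(1, 1) \<in> agents K N"
    using K_pos N_pos by (auto simp: agents_def)
  then have "card (agents K N) > 0"
    by (auto simp: card_gt_0_iff)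
  then have n_pos: "n > 0"
    unfolding n_def card_agents[symmetric] by simp
  have dists: "is_distK K mu" "is_distK K (emp N a)" "is_distK K nu"
    unfolding mu_def nu_def by (intro is_distK_emp is_distK_nuMF N_pos)+
  have mean_field: "(\<Sum>k\<in>{1..K}. (real (N k) / n) * rMF r k mu pol) = (\<Sum>i\<in>agents K N. EG i) / n"
    unfolding mu_def nu_def EG_def G_def by (rule sum_weighted_rMF_emp[OF N_pos])
  have lipschitz: "\<bar>r (fst i) (s i) (a i) mu (emp N a) - G i (a i)\<bar> \<le> L_R * l1K K (emp N a) nu"
    if "i \<in> agents K N" for i
  proof -
    have "fst i \<in> {1..K}"
      using that by (auto simp: agents_def)
    with r_lip dists have "\<bar>r (fst i) (s i) (a i) mu (emp N a) - G i (a i)\<bar>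
        \<le> L_R * (l1K K mu mu + l1K K (emp N a) nu)"
      unfolding G_def by blast
    then show ?thesis
      by (simp add: l1K_def)
  qed
  have "(\<Sum>i\<in>agents K N. \<bar>r (fst i) (s i) (a i) mu (emp N a) - G i (a i)\<bar>)
      \<le> (\<Sum>i\<in>agents K N. L_R * l1K K (emp N a) nu)"
    using lipschitz by (rule sum_mono)
  also have "\<dots> = n * (L_R * l1K K (emp N a) nu)"
    by (simp add: n_def card_agents)
  finally have "(\<Sum>i\<in>agents K N. \<bar>r (fst i) (s i) (a i) mu (emp N a) - G i (a i)\<bar>)
      \<le> n * (L_R * l1K K (emp N a) nu)" .
  then have lipschitz_part: "(\<Sum>i\<in>agents K N. \<bar>r (fst i) (s i) (a i) mu (emp N a) - G i (a i)\<bar>) / n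
      \<le> L_R * l1K K (emp N a) nu"
    using n_pos by (simp add: divide_le_eq mult.commute)
  have "(1 / n) * (\<Sum>k\<in>{1..K}. \<Sum>j\<in>{1..N k}. r k (s (k, j)) (a (k, j)) mu (emp N a))
        - (\<Sum>k\<in>{1..K}. (real (N k) / n) * rMF r k mu pol)
      = (\<Sum>i\<in>agents K N. r (fst i) (s i) (a i) mu (emp N a) - G i (a i)) / n
        + (\<Sum>i\<in>agents K N. G i (a i) - EG i) / n"
    unfolding mean_field by (simp add: sum_agents sum_subtractf diff_divide_distrib)
  then have "\<bar>(1 / n) * (\<Sum>k\<in>{1..K}. \<Sum>j\<in>{1..N k}. r k (s (k, j)) (a (k, j)) mu (emp N a))
        - (\<Sum>k\<in>{1..K}. (real (N k) / n) * rMF r k mu pol)\<bar>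
      \<le> (\<Sum>i\<in>agents K N. \<bar>r (fst i) (s i) (a i) mu (emp N a) - G i (a i)\<bar>) / n
        + \<bar>\<Sum>i\<in>agents K N. G i (a i) - EG i\<bar> / n"
    using n_pos by (simp add: abs_divide divide_right_mono sum_abs order_trans[OF abs_triangle_ineq])
  with lipschitz_part show ?thesis
    unfolding n_def mu_def nu_def G_def EG_def by linarith
qed

lemma inverse_sqrt_sum_le_sum_inverse_sqrt:
  fixes N :: "'a \<Rightarrow> nat"
  assumes "finite A" "k \<in> A" "\<forall>k\<in>A. N k \<ge> 1"
  shows "1 / sqrt (real (\<Sum>k\<in>A. N k)) \<le> (\<Sum>k\<in>A. 1 / sqrt (real (N k)))"
proof -
  have "N k \<le> (\<Sum>k\<in>A. N k)"
    using assms(1,2) by (intro member_le_sum) auto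
  then have "1 / sqrt (real (\<Sum>k\<in>A. N k)) \<le> 1 / sqrt (real (N k))"
    using assms(2,3) by (intro divide_left_mono real_sqrt_le_mono mult_pos_pos) (auto simp del: of_nat_sum)
  also have "\<dots> \<le> (\<Sum>k\<in>A. 1 / sqrt (real (N k)))"
    using assms(1,2) by (intro member_le_sum) auto
  finally show ?thesis .
qed

lemma expectation_act_dist_reward_deviation_le:
  fixes r :: "nat \<Rightarrow> 'x::finite \<Rightarrow> 'u::finite \<Rightarrow> 'x distK \<Rightarrow> 'u distK \<Rightarrow> real"
    and pol :: "nat \<Rightarrow> nat \<Rightarrow> 'x \<Rightarrow> 'x distK \<Rightarrow> 'u pmf"
  assumes K_pos: "K \<ge> 1" and N_pos: "\<forall>k\<in>{1..K}. N k \<ge> 1" and L_R_nonneg: "0 \<le> L_R"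
    and r_bound: "\<forall>k\<in>{1..K}. \<forall>x u mu nu. is_distK K mu \<and> is_distK K nu \<longrightarrow> \<bar>r k x u mu nu\<bar> \<le> M_R"
    and r_lip: "\<forall>k\<in>{1..K}. \<forall>x u mu1 nu1 mu2 nu2.
        is_distK K mu1 \<and> is_distK K nu1 \<and> is_distK K mu2 \<and> is_distK K nu2 \<longrightarrow>
        \<bar>r k x u mu1 nu1 - r k x u mu2 nu2\<bar> \<le> L_R * (l1K K mu1 mu2 + l1K K nu1 nu2)"
  shows "measure_pmf.expectation (act_dist K N pol t s)
        (\<lambda>a. \<bar>(1 / real (\<Sum>k\<in>{1..K}. N k)) *
              (\<Sum>k\<in>{1..K}. \<Sum>j\<in>{1..N k}. r k (s (k, j)) (a (k, j)) (emp N s) (emp N a))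
           - (\<Sum>k\<in>{1..K}. (real (N k) / real (\<Sum>k'\<in>{1..K}. N k')) * rMF r k (emp N s) (pol t))\<bar>)
      \<le> (M_R + L_R) * (\<Sum>k\<in>{1..K}. 1 / sqrt (real (N k))) * sqrt (real CARD('u))"
proof -
  define n where "n = real (\<Sum>k\<in>{1..K}. N k)"
  define S where "S = (\<Sum>k\<in>{1..K}. 1 / sqrt (real (N k)))"
  define mu where "mu = emp N s"
  define nu where "nu = nuMF mu (pol t)"
  define D where "D = (\<lambda>i. pol t (fst i) (s i) mu)"
  define G where "G i b = r (fst i) (s i) b mu nu" for i b
  let ?E = "measure_pmf.expectation (act_dist K N pol t s)"
  have act_dist_eq: "act_dist K N pol t s = Pi_pmf (agents K N) undefined D"
    by (simp add: act_dist_def D_def mu_def split_beta')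
  have dists: "is_distK K mu" "is_distK K nu"
    unfolding mu_def nu_def by (intro is_distK_emp is_distK_nuMF N_pos)+
  have "1 \<in> {1..K}"
    using K_pos by simp
  with r_bound dists have M_R_nonneg: "0 \<le> M_R"
    by (meson abs_ge_zero order_trans)
  have n_pos: "0 < n" and inverse_sqrt_n: "1 / sqrt n \<le> S"
    using inverse_sqrt_sum_le_sum_inverse_sqrt[OF _ \<open>1 \<in> {1..K}\<close> N_pos] N_pos K_pos
    unfolding n_def S_def by (auto intro!: sum_pos)
  have "\<bar>G i b\<bar> \<le> M_R" if "i \<in> agents K N" for i b
    using that r_bound dists unfolding G_def agents_def by auto
  then have sampling_part: "?E (\<lambda>a. \<bar>\<Sum>i\<in>agents K N. G i (a i) - measure_pmf.expectation (D i) (G i)\<bar>)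
      \<le> M_R * sqrt n"
    unfolding act_dist_eq n_def card_agents[symmetric]
    by (rule expectation_abs_centered_sum_Pi_pmf_le_bound[OF finite_agents order_refl])
  have "M_R * sqrt n / n = M_R * (1 / sqrt n)"
    using n_pos by (metis divide_divide_eq_right mult_1_right real_div_sqrt less_imp_le times_divide_eq_right)
  also have "\<dots> \<le> M_R * (S * sqrt (real CARD('u)))"
  proof -
    have "0 \<le> S"
      unfolding S_def by (intro sum_nonneg) auto
    then have "S \<le> S * sqrt (real CARD('u))"
      by (simp add: mult_le_cancel_left1)
    with inverse_sqrt_n M_R_nonneg show ?thesis
      by (intro mult_left_mono) auto
  qed
  finally have sampling_bound: "M_R * sqrt n / n \<le> M_R * (S * sqrt (real CARD('u)))" .
  have "?E (\<lambda>a. \<bar>(1 / n) * (\<Sum>k\<in>{1..K}. \<Sum>j\<in>{1..N k}. r k (s (k, j)) (a (k, j)) mu (emp N a))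
           - (\<Sum>k\<in>{1..K}. (real (N k) / n) * rMF r k mu (pol t))\<bar>)
      \<le> ?E (\<lambda>a. L_R * l1K K (emp N a) nu
               + \<bar>\<Sum>i\<in>agents K N. G i (a i) - measure_pmf.expectation (D i) (G i)\<bar> / n)"
    using reward_deviation_le[OF K_pos N_pos r_lip, where s = s and pol = "pol t"]
    unfolding n_def mu_def nu_def D_def G_def
    by (intro Bochner_Integration.integral_mono integrable_act_dist) auto
  also have "\<dots> = L_R * ?E (\<lambda>a. l1K K (emp N a) nu)
      + ?E (\<lambda>a. \<bar>\<Sum>i\<in>agents K N. G i (a i) - measure_pmf.expectation (D i) (G i)\<bar>) / n"
    by simp
  also have "\<dots> \<le> L_R * (S * sqrt (real CARD('u))) + M_R * sqrt n / n"
    using expectation_act_dist_l1K_nuMF_le[OF N_pos, where pol = pol and t = t and s = s]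
      sampling_part n_pos L_R_nonneg
    unfolding S_def nu_def mu_def
    by (intro add_mono mult_left_mono divide_right_mono) auto
  finally show ?thesis
    using sampling_bound unfolding n_def S_def mu_def nu_def by (simp add: algebra_simps)
qed

lemma expectation_sa_dist_le:
  fixes pol :: "nat \<Rightarrow> nat \<Rightarrow> 'x \<Rightarrow> 'x distK \<Rightarrow> 'u::finite pmf"
    and F :: "(nat \<times> nat \<Rightarrow> 'x) \<Rightarrow> (nat \<times> nat \<Rightarrow> 'u) \<Rightarrow> real"
  assumes F_nonneg: "\<And>s a. 0 \<le> F s a"
    and bound: "\<And>s. measure_pmf.expectation (act_dist K N pol t s) (F s) \<le> B"
  shows "measure_pmf.expectation (sa_dist K N pol P init t) (\<lambda>(s, a). F s a) \<le> B"
proof -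
  have "measure_pmf.expectation (sa_dist K N pol P init t) (\<lambda>(s, a). F s a)
      \<le> measure_pmf.expectation (state_dist K N pol P init t) (\<lambda>_. B)"
    unfolding sa_dist_def by (rule expectation_bind_pmf_le) (auto simp: F_nonneg bound)
  then show ?thesis
    by simp
qed

lemma expectation_sas_dist_le:
  fixes pol :: "nat \<Rightarrow> nat \<Rightarrow> 'x::finite \<Rightarrow> 'x distK \<Rightarrow> 'u::finite pmf"
    and P :: "nat \<Rightarrow> 'x \<Rightarrow> 'u \<Rightarrow> 'x distK \<Rightarrow> 'u distK \<Rightarrow> 'x pmf"
    and F :: "(nat \<times> nat \<Rightarrow> 'x) \<Rightarrow> (nat \<times> nat \<Rightarrow> 'u) \<Rightarrow> (nat \<times> nat \<Rightarrow> 'x) \<Rightarrow> real"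
  assumes F_nonneg: "\<And>s a s'. 0 \<le> F s a s'"
    and bound: "\<And>s. measure_pmf.expectation (act_dist K N pol t s)
                   (\<lambda>a. measure_pmf.expectation (next_dist K N P s a) (F s a)) \<le> B"
  shows "measure_pmf.expectation (sas_dist K N pol P init t) (\<lambda>(s, a, s'). F s a s') \<le> B"
proof -
  let ?step = "\<lambda>s. bind_pmf (act_dist K N pol t s) (\<lambda>a. map_pmf (\<lambda>s'. (s, a, s')) (next_dist K N P s a))"
  have sas_dist_eq: "sas_dist K N pol P init t = bind_pmf (state_dist K N pol P init t) ?step"
    unfolding sas_dist_def sa_dist_def by (simp add: bind_assoc_pmf bind_map_pmf)
  have step_bound: "measure_pmf.expectation (?step s) (\<lambda>(s, a, s'). F s a s') \<le> B" for s
  proof -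
    have "measure_pmf.expectation (?step s) (\<lambda>(s, a, s'). F s a s')
        \<le> measure_pmf.expectation (act_dist K N pol t s)
             (\<lambda>a. measure_pmf.expectation (next_dist K N P s a) (F s a))"
      by (rule expectation_bind_pmf_le) (auto simp: F_nonneg split: prod.split)
    also have "\<dots> \<le> B"
      by (rule bound)
    finally show ?thesis .
  qed
  have finite_step: "finite (set_pmf (?step s))" for s
    unfolding act_dist_def next_dist_def set_bind_pmf set_map_pmf
    by (intro finite_UN_I finite_imageI finite_set_Pi_pmf finite_agents)
  have "measure_pmf.expectation (sas_dist K N pol P init t) (\<lambda>(s, a, s'). F s a s')
      \<le> measure_pmf.expectation (state_dist K N pol P init t) (\<lambda>_. B)"
    unfolding sas_dist_eq
    by (rule expectation_bind_pmf_le)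
       (auto simp: F_nonneg step_bound integrable_measure_pmf_finite[OF finite_step] split: prod.split)
  then show ?thesis
    by simp
qed

theorem lemma10:
  fixes K :: nat and N :: "nat \<Rightarrow> nat"
    and M_R L_R L_P :: real
    and r :: "nat \<Rightarrow> 'x::finite \<Rightarrow> 'u::finite \<Rightarrow> 'x distK \<Rightarrow> 'u distK \<Rightarrow> real"
    and P :: "nat \<Rightarrow> 'x \<Rightarrow> 'u \<Rightarrow> 'x distK \<Rightarrow> 'u distK \<Rightarrow> 'x pmf"
    and pol :: "nat \<Rightarrow> nat \<Rightarrow> 'x \<Rightarrow> 'x distK \<Rightarrow> 'u pmf"
    and init :: "(nat \<times> nat \<Rightarrow> 'x) pmf"
    and t :: nat
  assumes K_pos: "K \<ge> 1"
    and N_pos: "\<forall>k\<in>{1..K}. N k \<ge> 1"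
    and consts_pos: "M_R > 0" "L_R > 0" "L_P > 0"
    and r_bound: "\<forall>k\<in>{1..K}. \<forall>x u mu nu. is_distK K mu \<and> is_distK K nu \<longrightarrow> \<bar>r k x u mu nu\<bar> \<le> M_R"
    and r_lip: "\<forall>k\<in>{1..K}. \<forall>x u mu1 nu1 mu2 nu2.
        is_distK K mu1 \<and> is_distK K nu1 \<and> is_distK K mu2 \<and> is_distK K nu2 \<longrightarrow>
        \<bar>r k x u mu1 nu1 - r k x u mu2 nu2\<bar> \<le> L_R * (l1K K mu1 mu2 + l1K K nu1 nu2)"
    and P_lip: "\<forall>k\<in>{1..K}. \<forall>x u mu1 nu1 mu2 nu2.
        is_distK K mu1 \<and> is_distK K nu1 \<and> is_distK K mu2 \<and> is_distK K nu2 \<longrightarrow>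
        (\<Sum>y\<in>UNIV. \<bar>pmf (P k x u mu1 nu1) y - pmf (P k x u mu2 nu2) y\<bar>)
          \<le> L_P * (l1K K mu1 mu2 + l1K K nu1 nu2)"
  shows
    "(measure_pmf.expectation (sa_dist K N pol P init t)
        (\<lambda>(s, a). l1K K (emp N a) (nuMF (emp N s) (pol t)))
      \<le> (\<Sum>k\<in>{1..K}. 1 / sqrt (real (N k))) * sqrt (real CARD('u)))
   \<and> (measure_pmf.expectation (sa_dist K N pol P init t)
        (\<lambda>(s, a). \<bar>(1 / real (\<Sum>k\<in>{1..K}. N k)) *
              (\<Sum>k\<in>{1..K}. \<Sum>j\<in>{1..N k}. r k (s (k, j)) (a (k, j)) (emp N s) (emp N a))
           - (\<Sum>k\<in>{1..K}. (real (N k) / real (\<Sum>k'\<in>{1..K}. N k')) * rMF r k (emp N s) (pol t))\<bar>)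
      \<le> (M_R + L_R) * (\<Sum>k\<in>{1..K}. 1 / sqrt (real (N k))) * sqrt (real CARD('u)))
   \<and> (measure_pmf.expectation (sas_dist K N pol P init t)
        (\<lambda>(s, a, s'). l1K K (emp N s') (PMF P (emp N s) (pol t)))
      \<le> (2 + real K * L_P) * (\<Sum>k\<in>{1..K}. 1 / sqrt (real (N k)))
          * sqrt (real CARD('x) * real CARD('u)))"
proof -
  have L_nonneg: "0 \<le> L_R" "0 \<le> L_P"
    using consts_pos by simp_all
  show ?thesis
    by (intro conjI expectation_sa_dist_le expectation_sas_dist_le l1K_nonneg abs_ge_zero
        expectation_act_dist_l1K_nuMF_le[OF N_pos]
        expectation_act_dist_reward_deviation_le[OF K_pos N_pos L_nonneg(1) r_bound r_lip]
        expectation_transition_deviation_le[OF N_pos L_nonneg(2) P_lip])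
qed

end
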